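(* Let $mG$ be a finite canonical misinformation game, $\Gamma=(\mathcal{AD}^*(\{mG\}),E)$ its adaptation graph, and $\Gamma'$ its loopless version. Then the length of the longest path in $\Gamma'$ is $\mathfrak{L}_{\mathcal{AD}}(mG)$.
   Context: A normal-form game is $G=\langle N,S,P\rangle$ with finite players $N$, finite pure strategy sets $S_i$, positions $S=\times_i S_i$, payoffs $P_i:S\to\mathbb{R}$. A misinformation game $mG=\langle G^0,G^1,\dots,G^{|N|}\rangle$ consists of the actual game $G^0$ and subjective games $G^i$; it is canonical if all $G^i=\langle N,S,P^i\rangle$ differ from $G^0$ only in payoffs and in every $G^i$ all players have equally many pure strategies. $NME(mG)$ is the set of profiles $\sigma=(\sigma_1,\dots,\sigma_{|N|})$ such that each $\sigma_i$ is player $i$'s component of some Nash equilibrium of $G^i$. $\chi(\sigma)=\mathrm{supp}(\sigma_1)\times\dots\times\mathrm{supp}(\sigma_{|N|})$. For $\vec v\in S$, $mG_{\vec v}$ is obtained by replacing, in every $P^i$ ($i\ge1$), the payoff vector at position $\vec v$ by $P^0(\vec v)$. For a set $M$ of misinformation games, $\mathcal{AD}(M)=\{mG_{\vec u}: mG\in M,\sigma\in NME(mG),\vec u\in\chi(\sigma)\}$, $\mathcal{AD}^{(0)}(M)=M$, $\mathcal{AD}^{(t+1)}(M)=\mathcal{AD}^{(t)}(\mathcal{AD}(M))$, $\mathcal{AD}^*(M)=\bigcup_{t\ge0}\mathcal{AD}^{(t)}(M)$. The length $\mathfrak{L}_{\mathcal{AD}}(mG)$ is the least $t\ge0$ with $\mathcal{AD}^{(t+1)}(\{mG\})=\mathcal{AD}^{(t)}(\{mG\})$.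 The adaptation graph $\Gamma$ has vertex set $\mathcal{AD}^*(\{mG\})$ and an edge $(mG^1,mG^2)$ iff $mG^2=(mG^1)_{\vec v}$ for some $\sigma\in NME(mG^1)$, $\vec v\in\chi(\sigma)$; $\Gamma'$ is $\Gamma$ with self-loops removed. *)

theory Defs
  imports Main "HOL-Library.Extended_Nat"
begin

text \<open>Canonical finite misinformation games with players 0,...,n-1 and
  pure strategies 0,...,m-1 for every player in every game.  A misinformation game is a pair (P0, Psub):
  P0 is the payoff of the actual game, Psub i the payoff of player i's
  subjective game (i < n).\<close>

type_synonym payoff = "nat list \<Rightarrow> nat \<Rightarrow> real"
type_synonym mgame = "payoff \<times> (nat \<Rightarrow> payoff)"
type_synonym profile = "nat \<Rightarrow> nat \<Rightarrow> real"

definition positions :: "nat \<Rightarrow> nat \<Rightarrow> nat list set" where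
  "positions n m = {v. length v = n \<and> (\<forall>j<n. v ! j < m)}"

definition mixed :: "nat \<Rightarrow> (nat \<Rightarrow> real) \<Rightarrow> bool" where
  "mixed m t \<longleftrightarrow> (\<forall>s<m. 0 \<le> t s) \<and> (\<Sum>s<m. t s) = 1"

definition support :: "nat \<Rightarrow> (nat \<Rightarrow> real) \<Rightarrow> nat set" where
  "support m t = {s. s < m \<and> 0 < t s}"

definition expected_payoff :: "nat \<Rightarrow> nat \<Rightarrow> payoff \<Rightarrow> profile \<Rightarrow> nat \<Rightarrow> real" where
  "expected_payoff n m P \<sigma> i = (\<Sum>v\<in>positions n m. (\<Prod>j<n. \<sigma> j (v ! j)) * P v i)"

definition nash_eq :: "nat \<Rightarrow> nat \<Rightarrow> payoff \<Rightarrow> profile \<Rightarrow> bool" where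
  "nash_eq n m P \<sigma> \<longleftrightarrow> (\<forall>j<n. mixed m (\<sigma> j)) \<and>
     (\<forall>i<n. \<forall>t. mixed m t \<longrightarrow> expected_payoff n m P (\<sigma>(i := t)) i \<le> expected_payoff n m P \<sigma> i)"

definition NME :: "nat \<Rightarrow> nat \<Rightarrow> mgame \<Rightarrow> profile set" where
  "NME n m mG = {\<sigma>. \<forall>i<n. \<exists>\<tau>. nash_eq n m (snd mG i) \<tau> \<and> \<sigma> i = \<tau> i}"

definition chi :: "nat \<Rightarrow> nat \<Rightarrow> profile \<Rightarrow> nat list set" where
  "chi n m \<sigma> = {v \<in> positions n m. \<forall>j<n. v ! j \<in> support m (\<sigma> j)}"

definition adapt :: "nat \<Rightarrow> mgame \<Rightarrow> nat list \<Rightarrow> mgame" where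
  "adapt n mG v = (fst mG, \<lambda>i. if i < n then (snd mG i)(v := fst mG v) else snd mG i)"

definition AD :: "nat \<Rightarrow> nat \<Rightarrow> mgame set \<Rightarrow> mgame set" where
  "AD n m M = {adapt n g v | g \<sigma> v. g \<in> M \<and> \<sigma> \<in> NME n m g \<and> v \<in> chi n m \<sigma>}"

fun AD_iter :: "nat \<Rightarrow> nat \<Rightarrow> nat \<Rightarrow> mgame set \<Rightarrow> mgame set" where
  "AD_iter n m 0 M = M"
| "AD_iter n m (Suc t) M = AD_iter n m t (AD n m M)"

definition AD_star :: "nat \<Rightarrow> nat \<Rightarrow> mgame set \<Rightarrow> mgame set" where
  "AD_star n m M = (\<Union>t. AD_iter n m t M)"

definition AD_length :: "nat \<Rightarrow> nat \<Rightarrow> mgame \<Rightarrow> nat" where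
  "AD_length n m mG = (LEAST t. AD_iter n m (Suc t) {mG} = AD_iter n m t {mG})"

definition adapt_edge :: "nat \<Rightarrow> nat \<Rightarrow> mgame \<Rightarrow> mgame \<Rightarrow> mgame \<Rightarrow> bool" where
  "adapt_edge n m mG0 g1 g2 \<longleftrightarrow> g1 \<in> AD_star n m {mG0} \<and> g2 \<in> AD_star n m {mG0} \<and>
     (\<exists>\<sigma> v. \<sigma> \<in> NME n m g1 \<and> v \<in> chi n m \<sigma> \<and> g2 = adapt n g1 v)"

definition adapt_edge' :: "nat \<Rightarrow> nat \<Rightarrow> mgame \<Rightarrow> mgame \<Rightarrow> mgame \<Rightarrow> bool" where
  "adapt_edge' n m mG0 g1 g2 \<longleftrightarrow> adapt_edge n m mG0 g1 g2 \<and> g1 \<noteq> g2"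

definition is_path' :: "nat \<Rightarrow> nat \<Rightarrow> mgame \<Rightarrow> mgame list \<Rightarrow> bool" where
  "is_path' n m mG0 p \<longleftrightarrow> p \<noteq> [] \<and> distinct p \<and> set p \<subseteq> AD_star n m {mG0} \<and>
     (\<forall>k. Suc k < length p \<longrightarrow> adapt_edge' n m mG0 (p ! k) (p ! Suc k))"

end

theory Submission
  imports Defs "HOL-Homology.Brouwer_Degree"
begin

text \<open>The number of positions at which every subjective payoff already agrees with the actual one
  is a potential on the adaptation graph: an adaptation step either changes nothing (a self-loop)
  or raises it by exactly one, and it is bounded by the number of positions; by Nash's theorem
  every game has an outgoing edge. So every edge of \<open>\<Gamma>'\<close> climbs one level. If \<open>D\<close> is the height
  above \<open>mG\<close> of the highest reachable game, the first \<open>t\<close> at which the iteration of \<open>AD\<close>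
  on \<open>{mG}\<close> becomes stationary is \<open>D\<close>, a climbing path of length \<open>D\<close> leads up to such a game,
  and no path is longer. Nash's theorem comes from Nash's map and Brouwer's fixed point theorem,
  the latter derived from the non-contractibility of spheres.\<close>

section \<open>Brouwer's fixed point theorem for balls\<close>

definition nball :: "nat \<Rightarrow> (nat \<Rightarrow> real) set" where
  "nball p = {x. (\<forall>i>p. x i = 0) \<and> (\<Sum>i\<le>p. (x i)^2) \<le> 1}"

definition radial_proj :: "nat \<Rightarrow> (nat \<Rightarrow> real) \<Rightarrow> nat \<Rightarrow> real" where
  "radial_proj p x = (\<lambda>i. x i / sqrt (\<Sum>j\<le>p. (x j)^2))"

lemma nsphere_top_of_set:
  "nsphere p = top_of_set {x. (\<Sum>i\<le>p. (x i)^2) = 1 \<and> (\<forall>i>p. x i = 0)}"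
  by (simp add: nsphere euclidean_product_topology)

lemma topspace_nsphere:
  "topspace (nsphere p) = {x. (\<Sum>i\<le>p. (x i)^2) = 1 \<and> (\<forall>i>p. x i = 0)}"
  by (simp add: nsphere)

lemma nsphere_subset_nball: "topspace (nsphere p) \<subseteq> nball p"
  by (auto simp: topspace_nsphere nball_def)

lemma sum_squares_pos:
  fixes x :: "nat \<Rightarrow> real"
  assumes "\<forall>i>p. x i = 0" "x \<noteq> (\<lambda>i. 0)"
  shows "0 < (\<Sum>j\<le>p. (x j)^2)"
proof -
  obtain k where k: "x k \<noteq> 0" using assms(2) by auto
  then have "k \<le> p" using assms(1) by (meson not_le)
  then have "(x k)^2 \<le> (\<Sum>j\<le>p. (x j)^2)" by (intro member_le_sum) auto
  moreover have "0 < (x k)^2" using k by simp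
  ultimately show ?thesis by linarith
qed

lemma radial_proj_in_nsphere:
  assumes "\<forall>i>p. x i = 0" "x \<noteq> (\<lambda>i. 0)"
  shows "radial_proj p x \<in> topspace (nsphere p)"
proof -
  have pos: "0 < (\<Sum>j\<le>p. (x j)^2)" using sum_squares_pos[OF assms] .
  have "(\<Sum>i\<le>p. (radial_proj p x i)^2) = (\<Sum>i\<le>p. (x i)^2) / (\<Sum>j\<le>p. (x j)^2)"
    using pos by (simp add: radial_proj_def power_divide flip: sum_divide_distrib)
  also have "\<dots> = 1" using pos by simp
  finally show ?thesis using assms(1) by (simp add: topspace_nsphere radial_proj_def)
qed

lemma radial_proj_nsphere: "x \<in> topspace (nsphere p) \<Longrightarrow> radial_proj p x = x"
  by (simp add: topspace_nsphere radial_proj_def)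

lemma homotopic_radial_proj:
  fixes d :: "real \<times> (nat \<Rightarrow> real) \<Rightarrow> nat \<Rightarrow> real" and p :: nat
  defines "Z \<equiv> {0..1} \<times> topspace (nsphere p)"
  assumes cont: "\<And>i. continuous_on Z (\<lambda>z. d z i)"
    and supp: "\<And>z i. z \<in> Z \<Longrightarrow> p < i \<Longrightarrow> d z i = 0"
    and nonzero: "\<And>z. z \<in> Z \<Longrightarrow> d z \<noteq> (\<lambda>i. 0)"
    and start: "\<And>x. x \<in> topspace (nsphere p) \<Longrightarrow> radial_proj p (d (0, x)) = f x"
    and finish: "\<And>x. x \<in> topspace (nsphere p) \<Longrightarrow> radial_proj p (d (1, x)) = g x"
  shows "homotopic_with (\<lambda>_. True) (nsphere p) (nsphere p) f g"
proof -
  have "\<And>z. z \<in> Z \<Longrightarrow> sqrt (\<Sum>j\<le>p. (d z j)^2) \<noteq> 0"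
    using sum_squares_pos supp nonzero by (metis less_numeral_extra(3) real_sqrt_eq_zero_cancel_iff)
  then have "continuous_on Z (\<lambda>z. radial_proj p (d z))"
    unfolding radial_proj_def by (intro continuous_intros cont) auto
  moreover have "(\<lambda>z. radial_proj p (d z)) ` Z \<subseteq> topspace (nsphere p)"
    using radial_proj_in_nsphere supp nonzero by auto
  ultimately show ?thesis
    using start finish unfolding Z_def
    by (subst homotopic_with)
      (auto simp: topspace_nsphere nsphere_top_of_set intro!: exI[of _ "\<lambda>z. radial_proj p (d z)"])
qed

lemma nball_scale:
  assumes "s \<in> {0..1}" "x \<in> nball p"
  shows "(\<lambda>j. s * x j) \<in> nball p"
proof -
  have "(\<Sum>i\<le>p. (s * x i)^2) = s^2 * (\<Sum>i\<le>p. (x i)^2)"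
    by (simp add: power_mult_distrib sum_distrib_left)
  also have "\<dots> \<le> 1"
    using assms by (auto simp: nball_def intro!: mult_le_one power_le_one sum_nonneg)
  finally show ?thesis using assms by (simp add: nball_def)
qed

lemma continuous_on_snd_coordinate:
  "continuous_on A (\<lambda>z::'a::topological_space \<times> ('b \<Rightarrow> real). snd z i)"
  by (rule continuous_on_compose2[OF continuous_on_product_coordinates continuous_on_snd]) auto

lemma homotopic_id_radial_proj_diff:
  assumes cont: "continuous_on (topspace (nsphere p)) g"
    and maps: "g ` topspace (nsphere p) \<subseteq> nball p"
    and no_fix: "\<And>x. x \<in> topspace (nsphere p) \<Longrightarrow> g x \<noteq> x"
  shows "homotopic_with (\<lambda>_. True) (nsphere p) (nsphere p) id (\<lambda>x. radial_proj p (\<lambda>i. x i - g x i))"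
proof (rule homotopic_radial_proj[where d = "\<lambda>z i. snd z i - fst z * g (snd z) i"])
  let ?S = "topspace (nsphere p)"
  have "continuous_on ?S (\<lambda>x. g x i)" for i
    using cont by (rule continuous_on_product_then_coordinatewise)
  then have "continuous_on ({0..1} \<times> ?S) (\<lambda>z. g (snd z) i)" for i
    by (rule continuous_on_compose2[OF _ continuous_on_snd]) auto
  then show "continuous_on ({0..1} \<times> ?S) (\<lambda>z. snd z i - fst z * g (snd z) i)" for i
    by (intro continuous_intros continuous_on_snd_coordinate)
  show "(\<lambda>i. snd z i - fst z * g (snd z) i) \<noteq> (\<lambda>i. 0)" if "z \<in> {0..1} \<times> ?S" for z
  proof
    obtain t x where z: "z = (t, x)" "t \<in> {0..1}" "x \<in> ?S" using \<open>z \<in> _\<close> by (cases z) auto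
    assume "(\<lambda>i. snd z i - fst z * g (snd z) i) = (\<lambda>i. 0)"
    then have x_eq: "x i = t * g x i" for i using z by (metis right_minus_eq fst_conv snd_conv)
    show False
    proof (cases "t = 1")
      case True
      then have "g x = x" using x_eq by auto
      then show False using no_fix z(3) by blast
    next
      case False
      have "1 = (\<Sum>i\<le>p. (x i)^2)" using z(3) by (simp add: topspace_nsphere)
      also have "\<dots> = t^2 * (\<Sum>i\<le>p. (g x i)^2)"
        by (simp add: x_eq power_mult_distrib sum_distrib_left)
      also have "\<dots> \<le> t^2"
        using maps z(3) by (intro mult_left_le) (auto simp: nball_def)
      also have "\<dots> < 1" using False z(2) by (simp add: power_less_one_iff)
      finally show False by simp
    qed
  qed
  show "snd z i - fst z * g (snd z) i = 0" if "z \<in> {0..1} \<times> ?S" "p < i" for z i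
    using that maps by (auto simp: topspace_nsphere nball_def)
qed (auto simp: radial_proj_nsphere)

lemma nullhomotopic_radial_proj:
  assumes cont: "continuous_on (nball p) h"
    and nonzero: "\<And>y. y \<in> nball p \<Longrightarrow> h y \<noteq> (\<lambda>i. 0)"
    and supp: "\<And>y i. y \<in> nball p \<Longrightarrow> p < i \<Longrightarrow> h y i = 0"
  shows "homotopic_with (\<lambda>_. True) (nsphere p) (nsphere p)
           (\<lambda>x. radial_proj p (h x)) (\<lambda>x. radial_proj p (h (\<lambda>i. 0)))"
proof (rule homotopic_radial_proj[where d = "\<lambda>z. h (\<lambda>j. (1 - fst z) * snd z j)"])
  let ?S = "topspace (nsphere p)"
  have shrink: "(\<lambda>j. (1 - fst z) * snd z j) \<in> nball p" if "z \<in> {0..1} \<times> ?S" for z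
    using that by (intro nball_scale) (auto intro: subsetD[OF nsphere_subset_nball])
  have inner: "continuous_on ({0..1} \<times> ?S) (\<lambda>z::real \<times> (nat \<Rightarrow> real). \<lambda>j. (1 - fst z) * snd z j)"
    by (intro continuous_on_coordinatewise_then_product continuous_intros
        continuous_on_snd_coordinate)
  have "continuous_on (nball p) (\<lambda>y. h y i)" for i
    using cont by (rule continuous_on_product_then_coordinatewise)
  then show "continuous_on ({0..1} \<times> ?S) (\<lambda>z. h (\<lambda>j. (1 - fst z) * snd z j) i)" for i
    by (rule continuous_on_compose2[OF _ inner]) (use shrink in auto)
  show "h (\<lambda>j. (1 - fst z) * snd z j) \<noteq> (\<lambda>i. 0)" if "z \<in> {0..1} \<times> ?S" for z
    using nonzero shrink[OF that] by blast
  show "h (\<lambda>j. (1 - fst z) * snd z j) i = 0" if "z \<in> {0..1} \<times> ?S" "p < i" for z i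
    using supp shrink[OF that(1)] that(2) by blast
qed simp_all

text \<open>Without a fixed point, the homotopies \<open>x - t f x\<close> and \<open>(1 - t) x - f ((1 - t) x)\<close>,
  projected radially, would contract the sphere.\<close>
theorem brouwer_nball:
  assumes cont: "continuous_on (nball p) f" and maps: "f ` nball p \<subseteq> nball p"
  shows "\<exists>x\<in>nball p. f x = x"
proof (rule ccontr)
  assume "\<not> (\<exists>x\<in>nball p. f x = x)"
  then have no_fix: "\<And>x. x \<in> nball p \<Longrightarrow> f x \<noteq> x" by blast
  have "homotopic_with (\<lambda>_. True) (nsphere p) (nsphere p) id (\<lambda>x. radial_proj p (\<lambda>i. x i - f x i))"
    using nsphere_subset_nball cont maps no_fix
    by (intro homotopic_id_radial_proj_diff continuous_on_subset[OF cont]) auto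
  moreover have "homotopic_with (\<lambda>_. True) (nsphere p) (nsphere p)
      (\<lambda>x. radial_proj p (\<lambda>i. x i - f x i)) (\<lambda>x. radial_proj p (\<lambda>i. 0 - f (\<lambda>j. 0) i))"
  proof (rule nullhomotopic_radial_proj[where h = "\<lambda>y i. y i - f y i"])
    have "continuous_on (nball p) (\<lambda>y. y i)" for i
      by (rule continuous_on_subset[OF continuous_on_product_coordinates]) simp
    moreover have "continuous_on (nball p) (\<lambda>y. f y i)" for i
      using cont by (rule continuous_on_product_then_coordinatewise)
    ultimately show "continuous_on (nball p) (\<lambda>y i. y i - f y i)"
      by (intro continuous_on_coordinatewise_then_product continuous_on_diff)
    show "(\<lambda>i. y i - f y i) \<noteq> (\<lambda>i. 0)" if "y \<in> nball p" for y
    proof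
      assume "(\<lambda>i. y i - f y i) = (\<lambda>i. 0)"
      then have "f y i = y i" for i by (metis right_minus_eq)
      then show False using no_fix[OF that] by blast
    qed
  qed (use maps in \<open>auto simp: nball_def\<close>)
  ultimately have "contractible_space (nsphere p)"
    unfolding contractible_space_def by (blast intro: homotopic_with_trans)
  then show False using non_contractible_space_nsphere by blast
qed

section \<open>Nash's theorem\<close>

definition pure :: "nat \<Rightarrow> nat \<Rightarrow> real" where
  "pure s = (\<lambda>s'. if s' = s then 1 else 0)"

lemma positions_nth_less: "v \<in> positions n m \<Longrightarrow> j < n \<Longrightarrow> v ! j < m"
  by (simp add: positions_def)

lemma finite_positions: "finite (positions n m)"
proof (rule finite_subset)
  show "positions n m \<subseteq> {xs. set xs \<subseteq> {..<m} \<and> length xs = n}"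
    by (auto simp: positions_def in_set_conv_nth)
  show "finite {xs. set xs \<subseteq> {..<m} \<and> length xs = n}"
    by (rule finite_lists_length_eq) simp
qed

lemma expected_payoff_upd:
  assumes "i < n"
  shows "expected_payoff n m P (\<sigma>(i := t)) i =
    (\<Sum>v\<in>positions n m. t (v ! i) * ((\<Prod>j\<in>{..<n} - {i}. \<sigma> j (v ! j)) * P v i))"
  unfolding expected_payoff_def
proof (rule sum.cong[OF refl])
  fix v
  have "(\<Prod>j<n. (\<sigma>(i := t)) j (v ! j)) = t (v ! i) * (\<Prod>j\<in>{..<n} - {i}. (\<sigma>(i := t)) j (v ! j))"
    using assms by (subst prod.remove[of "{..<n}" i]) auto
  also have "(\<Prod>j\<in>{..<n} - {i}. (\<sigma>(i := t)) j (v ! j)) = (\<Prod>j\<in>{..<n} - {i}. \<sigma> j (v ! j))"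
    by (rule prod.cong) auto
  finally show "(\<Prod>j<n. (\<sigma>(i := t)) j (v ! j)) * P v i =
      t (v ! i) * ((\<Prod>j\<in>{..<n} - {i}. \<sigma> j (v ! j)) * P v i)"
    by simp
qed

lemma expected_payoff_upd_linear:
  assumes "i < n"
  shows "expected_payoff n m P (\<sigma>(i := t)) i =
    (\<Sum>s<m. t s * expected_payoff n m P (\<sigma>(i := pure s)) i)"
proof -
  define R where "R v = (\<Prod>j\<in>{..<n} - {i}. \<sigma> j (v ! j)) * P v i" for v
  have "(\<Sum>s<m. t s * expected_payoff n m P (\<sigma>(i := pure s)) i)
      = (\<Sum>v\<in>positions n m. \<Sum>s<m. t s * (pure s (v ! i) * R v))"
    by (simp add: expected_payoff_upd[OF assms] R_def sum_distrib_left sum.swap[where B = "{..<m}"])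
  also have "\<dots> = (\<Sum>v\<in>positions n m. t (v ! i) * R v)"
  proof (rule sum.cong[OF refl])
    fix v assume "v \<in> positions n m"
    then have "v ! i < m" using assms by (rule positions_nth_less)
    have "(\<Sum>s<m. t s * (pure s (v ! i) * R v)) = (\<Sum>s<m. if v ! i = s then t s * R v else 0)"
      by (rule sum.cong) (auto simp: pure_def)
    then show "(\<Sum>s<m. t s * (pure s (v ! i) * R v)) = t (v ! i) * R v"
      using \<open>v ! i < m\<close> by (simp add: sum.delta)
  qed
  finally show ?thesis by (simp add: expected_payoff_upd[OF assms] R_def)
qed

corollary expected_payoff_linear:
  "i < n \<Longrightarrow> expected_payoff n m P \<sigma> i =
    (\<Sum>s<m. \<sigma> i s * expected_payoff n m P (\<sigma>(i := pure s)) i)"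
  using expected_payoff_upd_linear[of i n m P \<sigma> "\<sigma> i"] by simp

lemma continuous_on_expected_payoff:
  assumes "\<And>j s. continuous_on A (\<lambda>x. \<sigma> x j s)"
  shows "continuous_on A (\<lambda>x. expected_payoff n m P (\<sigma> x) i)"
  unfolding expected_payoff_def by (intro continuous_intros assms)

lemma mixed_support_nonempty:
  assumes "mixed m t"
  shows "\<exists>s<m. 0 < t s"
proof (rule ccontr)
  assume "\<not> ?thesis"
  then have "\<forall>s<m. t s = 0" using assms by (force simp: mixed_def)
  then show False using assms by (simp add: mixed_def)
qed

lemma mixed_le_one:
  assumes "mixed m t" "s < m"
  shows "t s \<le> 1"
proof -
  have "t s \<le> (\<Sum>s'<m. t s')" using assms by (intro member_le_sum) (auto simp: mixed_def)
  then show ?thesis using assms(1) by (simp add: mixed_def)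
qed

lemma mixed_average_le:
  assumes "mixed m t" "\<And>s. s < m \<Longrightarrow> e s \<le> c"
  shows "(\<Sum>s<m. t s * e s) \<le> c"
proof -
  have "(\<Sum>s<m. t s * e s) \<le> (\<Sum>s<m. t s * c)"
    using assms by (intro sum_mono mult_left_mono) (auto simp: mixed_def)
  also have "\<dots> = c" using assms(1) by (simp add: mixed_def flip: sum_distrib_right)
  finally show ?thesis .
qed

lemma mixed_support_le_average:
  assumes "mixed m t"
  shows "\<exists>s<m. 0 < t s \<and> e s \<le> (\<Sum>s'<m. t s' * e s')"
proof (rule ccontr)
  let ?a = "\<Sum>s'<m. t s' * e s'"
  assume "\<not> ?thesis"
  then have above: "\<And>s. s < m \<Longrightarrow> 0 < t s \<Longrightarrow> ?a < e s" by force
  obtain s0 where s0: "s0 < m" "0 < t s0" using mixed_support_nonempty[OF assms] by blast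
  have "(\<Sum>s<m. t s * ?a) < ?a"
  proof (rule sum_strict_mono_ex1[THEN order.strict_trans2])
    show "\<forall>s\<in>{..<m}. t s * ?a \<le> t s * e s"
      using above assms by (force simp: mixed_def less_le intro: mult_left_mono)
    show "\<exists>s\<in>{..<m}. t s * ?a < t s * e s"
      using s0 above[OF s0] by (intro bexI[of _ s0]) auto
  qed simp_all
  then show False using assms by (simp add: mixed_def flip: sum_distrib_right)
qed

definition gain :: "nat \<Rightarrow> nat \<Rightarrow> payoff \<Rightarrow> profile \<Rightarrow> nat \<Rightarrow> nat \<Rightarrow> real" where
  "gain n m P \<sigma> i s =
     max 0 (expected_payoff n m P (\<sigma>(i := pure s)) i - expected_payoff n m P \<sigma> i)"

definition nash_map :: "nat \<Rightarrow> nat \<Rightarrow> payoff \<Rightarrow> profile \<Rightarrow> profile" where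
  "nash_map n m P \<sigma> = (\<lambda>i s. (\<sigma> i s + gain n m P \<sigma> i s) / (1 + (\<Sum>s'<m. gain n m P \<sigma> i s')))"

lemma gain_nonneg: "0 \<le> gain n m P \<sigma> i s"
  by (simp add: gain_def)

lemma sum_gain_nonneg: "0 \<le> (\<Sum>s<m. gain n m P \<sigma> i s)"
  by (intro sum_nonneg gain_nonneg)

lemma mixed_nash_map:
  assumes "mixed m (\<sigma> i)"
  shows "mixed m (nash_map n m P \<sigma> i)"
proof -
  define G where "G = (\<Sum>s<m. gain n m P \<sigma> i s)"
  have "0 \<le> G" unfolding G_def by (rule sum_gain_nonneg)
  have "(\<Sum>s<m. nash_map n m P \<sigma> i s) = (\<Sum>s<m. \<sigma> i s + gain n m P \<sigma> i s) / (1 + G)"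
    by (simp add: nash_map_def G_def sum_divide_distrib)
  also have "(\<Sum>s<m. \<sigma> i s + gain n m P \<sigma> i s) = 1 + G"
    using assms by (simp add: sum.distrib G_def mixed_def)
  finally have "(\<Sum>s<m. nash_map n m P \<sigma> i s) = 1" using \<open>0 \<le> G\<close> by simp
  moreover have "0 \<le> nash_map n m P \<sigma> i s" if "s < m" for s
    using assms that \<open>0 \<le> G\<close> gain_nonneg[of n m P \<sigma> i s]
    by (simp add: nash_map_def G_def mixed_def)
  ultimately show ?thesis by (simp add: mixed_def)
qed

lemma continuous_on_nash_map:
  assumes "\<And>i s. continuous_on A (\<lambda>x. \<sigma> x i s)"
  shows "continuous_on A (\<lambda>x. nash_map n m P (\<sigma> x) i s)"
proof -
  have "continuous_on A (\<lambda>x. ((\<sigma> x)(i := pure s)) j s')" for s j s'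
    using assms by (cases "j = i") auto
  then have "continuous_on A (\<lambda>x. gain n m P (\<sigma> x) i s)" for s
    unfolding gain_def by (intro continuous_intros continuous_on_expected_payoff assms)
  moreover have "1 + (\<Sum>s'<m. gain n m P (\<sigma> x) i s') \<noteq> 0" for x
    using sum_gain_nonneg[where n = n and m = m and P = P and \<sigma> = "\<sigma> x" and i = i] by linarith
  ultimately show ?thesis
    unfolding nash_map_def by (intro continuous_intros assms) auto
qed

text \<open>At a fixed point of the Nash map every strategy carries weight proportional to its gain;
  since some strategy in the support does no better than the current payoff, all gains vanish.\<close>
lemma gain_eq_0_if_nash_map_fixed:
  assumes i: "i < n" and mixed: "mixed m (\<sigma> i)"
    and fixed: "\<And>s. s < m \<Longrightarrow> nash_map n m P \<sigma> i s = \<sigma> i s"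
    and s: "s < m"
  shows "gain n m P \<sigma> i s = 0"
proof -
  define G where "G = (\<Sum>s'<m. gain n m P \<sigma> i s')"
  have "0 \<le> G" unfolding G_def by (rule sum_gain_nonneg)
  have gain_eq: "gain n m P \<sigma> i s' = \<sigma> i s' * G" if "s' < m" for s'
  proof -
    have "(\<sigma> i s' + gain n m P \<sigma> i s') / (1 + G) = \<sigma> i s'"
      using fixed[OF that] by (simp add: nash_map_def G_def)
    then show ?thesis using \<open>0 \<le> G\<close> by (simp add: field_simps)
  qed
  obtain s0 where s0: "s0 < m" "0 < \<sigma> i s0"
    "expected_payoff n m P (\<sigma>(i := pure s0)) i \<le>
       (\<Sum>s'<m. \<sigma> i s' * expected_payoff n m P (\<sigma>(i := pure s')) i)"
    using mixed_support_le_average[OF mixed,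
        where e = "\<lambda>s. expected_payoff n m P (\<sigma>(i := pure s)) i"] by blast
  then have "expected_payoff n m P (\<sigma>(i := pure s0)) i \<le> expected_payoff n m P \<sigma> i"
    by (simp only: expected_payoff_linear[OF i, of m P \<sigma>])
  then have "\<sigma> i s0 * G = 0" using gain_eq[OF s0(1)] by (simp add: gain_def)
  then show ?thesis using gain_eq[OF s] s0(2) by simp
qed

lemma nash_eq_if_nash_map_fixed:
  assumes mixed: "\<And>i. i < n \<Longrightarrow> mixed m (\<sigma> i)"
    and fixed: "\<And>i s. i < n \<Longrightarrow> s < m \<Longrightarrow> nash_map n m P \<sigma> i s = \<sigma> i s"
  shows "nash_eq n m P \<sigma>"
  unfolding nash_eq_def
proof (intro conjI allI impI)
  fix i t assume i: "i < n" and t: "mixed m t"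
  have "expected_payoff n m P (\<sigma>(i := pure s)) i \<le> expected_payoff n m P \<sigma> i" if "s < m" for s
    using gain_eq_0_if_nash_map_fixed[OF i mixed[OF i] fixed[OF i] that] by (simp add: gain_def)
  then have "(\<Sum>s<m. t s * expected_payoff n m P (\<sigma>(i := pure s)) i) \<le>
      expected_payoff n m P \<sigma> i"
    by (rule mixed_average_le[OF t])
  then show "expected_payoff n m P (\<sigma>(i := t)) i \<le> expected_payoff n m P \<sigma> i"
    by (simp only: expected_payoff_upd_linear[OF i, of m P \<sigma> t])
qed (rule mixed)

definition to_simplex :: "nat \<Rightarrow> (nat \<Rightarrow> real) \<Rightarrow> nat \<Rightarrow> real" where
  "to_simplex m y = (\<lambda>s. (max (y s) 0 + max 0 (1 - (\<Sum>t<m. max (y t) 0)) / m) /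
                         max (\<Sum>t<m. max (y t) 0) 1)"

lemma mixed_to_simplex:
  assumes "0 < m"
  shows "mixed m (to_simplex m y)"
proof -
  define S where "S = (\<Sum>t<m. max (y t) 0)"
  have "(\<Sum>s<m. to_simplex m y s) = (\<Sum>s<m. max (y s) 0 + max 0 (1 - S) / m) / max S 1"
    by (simp add: to_simplex_def S_def sum_divide_distrib)
  also have "(\<Sum>s<m. max (y s) 0 + max 0 (1 - S) / m) = max S 1"
    using assms by (simp add: sum.distrib S_def max_def)
  finally have "(\<Sum>s<m. to_simplex m y s) = 1" by simp
  moreover have "0 \<le> to_simplex m y s" for s
    unfolding to_simplex_def by (intro divide_nonneg_nonneg add_nonneg_nonneg) auto
  ultimately show ?thesis by (simp add: mixed_def)
qed

lemma to_simplex_mixed: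
  assumes "mixed m y" "s < m"
  shows "to_simplex m y s = y s"
proof -
  have "(\<Sum>t<m. max (y t) 0) = (\<Sum>t<m. y t)"
    using assms(1) by (intro sum.cong) (auto simp: mixed_def)
  then show ?thesis using assms by (simp add: to_simplex_def mixed_def)
qed

lemma to_simplex_cong:
  assumes "\<And>t. t < m \<Longrightarrow> y t = y' t" "s < m"
  shows "to_simplex m y s = to_simplex m y' s"
proof -
  have "(\<Sum>t<m. max (y t) 0) = (\<Sum>t<m. max (y' t) 0)" using assms by (intro sum.cong) auto
  then show ?thesis using assms by (simp add: to_simplex_def)
qed

lemma continuous_on_to_simplex:
  assumes "0 < m" "\<And>t. continuous_on A (\<lambda>x. y x t)"
  shows "continuous_on A (\<lambda>x. to_simplex m (y x) s)"
  unfolding to_simplex_def using assms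
  by (intro continuous_intros) (auto simp: max_def)

lemma in_nball_if_small:
  fixes y :: "nat \<Rightarrow> real"
  assumes "0 < N" "\<And>k. k < N \<Longrightarrow> \<bar>y k\<bar> \<le> 1 / N" "\<And>k. N \<le> k \<Longrightarrow> y k = 0"
  shows "y \<in> nball (N - 1)"
proof -
  have "(\<Sum>k\<le>N - 1. (y k)^2) \<le> (\<Sum>k\<le>N - 1. (1 / N)^2)"
    using assms(1,2) by (intro sum_mono power2_le_iff_abs_le[THEN iffD2]) auto
  also have "\<dots> = 1 / N" using assms(1) by (simp add: power2_eq_square)
  also have "\<dots> \<le> 1" using assms(1) by simp
  finally show ?thesis using assms(3) by (auto simp: nball_def)
qed

text \<open>Coordinate \<open>i * m + s\<close> of a vector in the ball stores \<open>\<sigma> i s / (n * m)\<close>; arbitrary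
  vectors are read back as profiles through the retraction \<open>to_simplex\<close>.\<close>
definition profile_of :: "nat \<Rightarrow> nat \<Rightarrow> (nat \<Rightarrow> real) \<Rightarrow> profile" where
  "profile_of n m x = (\<lambda>i. to_simplex m (\<lambda>s. real (n * m) * x (i * m + s)))"

definition nash_vector_map :: "nat \<Rightarrow> nat \<Rightarrow> payoff \<Rightarrow> (nat \<Rightarrow> real) \<Rightarrow> nat \<Rightarrow> real" where
  "nash_vector_map n m P x = (\<lambda>k. if k < n * m
     then nash_map n m P (profile_of n m x) (k div m) (k mod m) / real (n * m) else 0)"

lemma mixed_profile_of: "0 < m \<Longrightarrow> mixed m (profile_of n m x i)"
  unfolding profile_of_def by (rule mixed_to_simplex)

lemma continuous_on_nash_vector_map:
  assumes "0 < m"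
  shows "continuous_on A (nash_vector_map n m P)"
proof -
  have "continuous_on UNIV (\<lambda>x. profile_of n m x i s)" for i s
    unfolding profile_of_def
    by (intro continuous_on_to_simplex assms continuous_intros continuous_on_product_coordinates)
  then have "continuous_on UNIV (\<lambda>x. nash_map n m P (profile_of n m x) i s)" for i s
    by (rule continuous_on_nash_map)
  then have "continuous_on A (\<lambda>x. nash_map n m P (profile_of n m x) i s)" for i s
    by (rule continuous_on_subset) simp
  then have "continuous_on A (\<lambda>x. nash_vector_map n m P x k)" for k
    unfolding nash_vector_map_def divide_inverse
    by (cases "k < n * m") (simp_all add: continuous_on_mult_right)
  then show ?thesis by (rule continuous_on_coordinatewise_then_product)
qed

lemma nash_vector_map_in_nball:
  assumes "0 < n" "0 < m"
  shows "nash_vector_map n m P x \<in> nball (n * m - 1)"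
proof (rule in_nball_if_small)
  fix k assume "k < n * m"
  let ?v = "nash_map n m P (profile_of n m x) (k div m) (k mod m)"
  have "mixed m (nash_map n m P (profile_of n m x) (k div m))"
    by (rule mixed_nash_map[where \<sigma> = "profile_of n m x", OF mixed_profile_of[OF assms(2)]])
  then have "0 \<le> ?v" "?v \<le> 1" using assms(2) mixed_le_one by (auto simp: mixed_def)
  then show "\<bar>nash_vector_map n m P x k\<bar> \<le> 1 / real (n * m)"
    using \<open>k < n * m\<close> by (simp add: nash_vector_map_def divide_right_mono)
qed (use assms in \<open>simp_all add: nash_vector_map_def\<close>)

lemma nash_map_fixed_if_nash_vector_map_fixed:
  assumes "0 < m" "nash_vector_map n m P x = x" "i < n" "s < m"
  shows "nash_map n m P (profile_of n m x) i s = profile_of n m x i s"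
proof -
  have "real (n * m) * x (i * m + t) = nash_map n m P (profile_of n m x) i t" if "t < m" for t
  proof -
    have "i * m + t < n * m"
      using that assms(3) mult_le_mono1[of "Suc i" n m] by simp
    moreover have "(i * m + t) div m = i" "(i * m + t) mod m = t"
      using that by (simp_all add: add.commute[of "i * m"])
    ultimately have "x (i * m + t) = nash_map n m P (profile_of n m x) i t / real (n * m)"
      using fun_cong[OF assms(2), of "i * m + t"] by (simp add: nash_vector_map_def)
    then show ?thesis using assms(1,3) by simp
  qed
  then have "profile_of n m x i s = to_simplex m (nash_map n m P (profile_of n m x) i) s"
    unfolding profile_of_def using assms(4) by (rule to_simplex_cong)
  also have "\<dots> = nash_map n m P (profile_of n m x) i s"
    by (rule to_simplex_mixed[OF mixed_nash_map[where \<sigma> = "profile_of n m x",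
          OF mixed_profile_of[OF assms(1)]] assms(4)])
  finally show ?thesis by simp
qed

theorem nash_eq_exists:
  assumes "0 < n" "0 < m"
  shows "\<exists>\<sigma>. nash_eq n m P \<sigma>"
proof -
  obtain x where "nash_vector_map n m P x = x"
    using brouwer_nball[OF continuous_on_nash_vector_map[OF assms(2)]]
      nash_vector_map_in_nball[OF assms] by blast
  then have "nash_eq n m P (profile_of n m x)"
    using nash_eq_if_nash_map_fixed mixed_profile_of[OF assms(2)]
      nash_map_fixed_if_nash_vector_map_fixed[OF assms(2)] by blast
  then show ?thesis by blast
qed

section \<open>Graphs with a potential\<close>

locale potential_graph =
  fixes succ :: "'a \<Rightarrow> 'a set" and pot :: "'a \<Rightarrow> nat" and bound :: nat
  assumes pot_succ: "y \<in> succ x \<Longrightarrow> y \<noteq> x \<Longrightarrow> pot y = Suc (pot x)"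
    and succ_nonempty: "succ x \<noteq> {}"
    and pot_le_bound: "pot x \<le> bound"
begin

definition reach :: "'a \<Rightarrow> nat \<Rightarrow> 'a set" where
  "reach x0 t = ((\<lambda>M. \<Union>x\<in>M. succ x) ^^ t) {x0}"

definition reachable :: "'a \<Rightarrow> 'a set" where
  "reachable x0 = (\<Union>t. reach x0 t)"

definition depth :: "'a \<Rightarrow> nat" where
  "depth x0 = Max (pot ` reachable x0) - pot x0"

lemma reach_0 [simp]: "reach x0 0 = {x0}"
  by (simp add: reach_def)

lemma reach_Suc: "reach x0 (Suc t) = (\<Union>x\<in>reach x0 t. succ x)"
  by (simp add: reach_def)

lemma pot_succ_le: "y \<in> succ x \<Longrightarrow> pot y \<le> Suc (pot x)"
  using pot_succ by (cases "y = x") auto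

lemma pot_le_pot_succ: "y \<in> succ x \<Longrightarrow> pot x \<le> pot y"
  using pot_succ by (cases "y = x") auto

lemma pot_reach: "y \<in> reach x0 t \<Longrightarrow> pot x0 \<le> pot y \<and> pot y \<le> pot x0 + t"
proof (induction t arbitrary: y)
  case (Suc t)
  from Suc.prems obtain x where "x \<in> reach x0 t" "y \<in> succ x" by (auto simp: reach_Suc)
  with Suc.IH[of x] show ?case using pot_succ_le pot_le_pot_succ by fastforce
qed simp

text \<open>A walk that does not climb at every step contains a loop, which can be deleted \<dots>\<close>
lemma reach_drop_loop:
  "y \<in> reach x0 (Suc t) \<Longrightarrow> pot y < pot x0 + Suc t \<Longrightarrow> y \<in> reach x0 t"
proof (induction t arbitrary: y)
  case 0
  then have "y \<in> succ x0" by (simp add: reach_Suc)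
  then show ?case using pot_succ[OF \<open>y \<in> succ x0\<close>] 0(2) by (cases "y = x0") auto
next
  case (Suc t)
  from Suc.prems(1) obtain x where x: "x \<in> reach x0 (Suc t)" "y \<in> succ x"
    by (auto simp: reach_Suc)
  show ?case
  proof (cases "y = x")
    case False
    then have "pot x < pot x0 + Suc t" using pot_succ[OF x(2)] Suc.prems(2) by simp
    then have "x \<in> reach x0 t" by (rule Suc.IH[OF x(1)])
    then show ?thesis using x(2) by (auto simp: reach_Suc)
  qed (use x in simp)
qed

text \<open>\<dots> or repeated.\<close>
lemma reach_add_loop:
  "y \<in> reach x0 t \<Longrightarrow> pot y < pot x0 + t \<Longrightarrow> y \<in> reach x0 (Suc t)"
proof (induction t arbitrary: y)
  case (Suc t)
  from Suc.prems(1) obtain x where x: "x \<in> reach x0 t" "y \<in> succ x"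
    by (auto simp: reach_Suc)
  show ?case
  proof (cases "y = x")
    case True
    then show ?thesis using Suc.prems(1) x(2) by (auto simp: reach_Suc)
  next
    case False
    then have "pot x < pot x0 + t" using pot_succ[OF x(2)] Suc.prems(2) by simp
    then have "x \<in> reach x0 (Suc t)" by (rule Suc.IH[OF x(1)])
    then show ?thesis using x(2) by (auto simp: reach_Suc)
  qed
qed simp

lemma reach_pot_diff:
  "y \<in> reach x0 t \<Longrightarrow> y \<in> reach x0 (pot y - pot x0)"
proof (induction t)
  case (Suc t)
  then show ?case
    using pot_reach[OF Suc.prems] reach_drop_loop[OF Suc.prems]
    by (cases "pot y = pot x0 + Suc t") auto
qed simp

lemma reachable_iff: "y \<in> reachable x0 \<longleftrightarrow> (\<exists>t. y \<in> reach x0 t)"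
  by (simp add: reachable_def)

lemma succ_reachable:
  assumes "x \<in> reachable x0" "y \<in> succ x"
  shows "y \<in> reachable x0"
proof -
  obtain t where "x \<in> reach x0 t" using assms(1) by (auto simp: reachable_iff)
  then have "y \<in> reach x0 (Suc t)" using assms(2) by (auto simp: reach_Suc)
  then show ?thesis by (auto simp: reachable_iff)
qed

lemma root_reachable: "x0 \<in> reachable x0"
  using reach_0 reachable_iff by blast

lemma finite_pot_reachable: "finite (pot ` reachable x0)"
  by (rule finite_subset[of _ "{..bound}"]) (auto intro: pot_le_bound)

lemma pot_reachable:
  assumes "y \<in> reachable x0"
  shows "pot x0 \<le> pot y \<and> pot y \<le> pot x0 + depth x0"
proof -
  have "pot y \<le> Max (pot ` reachable x0)"
    using assms finite_pot_reachable by simp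
  then show ?thesis
    using assms pot_reach by (fastforce simp: reachable_iff depth_def)
qed

lemma depth_attained:
  obtains y where "y \<in> reach x0 (depth x0)" "pot y = pot x0 + depth x0"
proof -
  have "Max (pot ` reachable x0) \<in> pot ` reachable x0"
    using finite_pot_reachable root_reachable by (intro Max_in) auto
  then obtain y where y: "y \<in> reachable x0" "pot y = Max (pot ` reachable x0)" by auto
  then have "pot y = pot x0 + depth x0"
    using pot_reachable[OF root_reachable] pot_reachable[OF y(1)] by (simp add: depth_def)
  moreover have "y \<in> reach x0 (depth x0)"
    using y(1) reach_pot_diff calculation by (fastforce simp: reachable_iff)
  ultimately show ?thesis using that by blast
qed

lemma top_self_loop:
  assumes "y \<in> reachable x0" "pot y = pot x0 + depth x0"
  shows "y \<in> succ y"
proof -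
  obtain z where z: "z \<in> succ y" using succ_nonempty by blast
  then have "pot z \<le> pot x0 + depth x0" using assms(1) succ_reachable pot_reachable by blast
  then have "z = y" using pot_succ[OF z] assms(2) by linarith
  then show ?thesis using z by simp
qed

lemma reach_Suc_depth: "reach x0 (Suc (depth x0)) = reach x0 (depth x0)"
proof
  show "reach x0 (Suc (depth x0)) \<subseteq> reach x0 (depth x0)"
  proof
    fix y assume y: "y \<in> reach x0 (Suc (depth x0))"
    then have "pot y \<le> pot x0 + depth x0" using pot_reachable reachable_iff by blast
    then show "y \<in> reach x0 (depth x0)" using reach_drop_loop[OF y] by simp
  qed
  show "reach x0 (depth x0) \<subseteq> reach x0 (Suc (depth x0))"
  proof
    fix y assume y: "y \<in> reach x0 (depth x0)"
    then have y': "y \<in> reachable x0" by (auto simp: reachable_iff)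
    show "y \<in> reach x0 (Suc (depth x0))"
    proof (cases "pot y < pot x0 + depth x0")
      case False
      then have "y \<in> succ y" using top_self_loop[OF y'] pot_reachable[OF y'] by simp
      then show ?thesis using y by (auto simp: reach_Suc)
    qed (rule reach_add_loop[OF y])
  qed
qed

lemma reach_stable:
  assumes "reach x0 (Suc t) = reach x0 t"
  shows "reach x0 (t + k) = reach x0 t"
proof (induction k)
  case (Suc k)
  then show ?case using assms by (simp add: reach_Suc)
qed simp

lemma Least_reach_stable: "(LEAST t. reach x0 (Suc t) = reach x0 t) = depth x0"
proof (rule Least_equality)
  show "reach x0 (Suc (depth x0)) = reach x0 (depth x0)" by (rule reach_Suc_depth)
next
  fix t assume stable: "reach x0 (Suc t) = reach x0 t"
  obtain y where y: "y \<in> reach x0 (depth x0)" "pot y = pot x0 + depth x0"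
    by (rule depth_attained)
  show "depth x0 \<le> t"
  proof (rule ccontr)
    assume "\<not> depth x0 \<le> t"
    then have "reach x0 (depth x0) = reach x0 t"
      using reach_stable[OF stable, of "depth x0 - t"] by simp
    then show False using y pot_reach[of y x0 t] \<open>\<not> depth x0 \<le> t\<close> by auto
  qed
qed

definition loopless_walk :: "'a list \<Rightarrow> bool" where
  "loopless_walk p \<longleftrightarrow> successively (\<lambda>x y. y \<in> succ x \<and> y \<noteq> x) p"

lemma pot_loopless_walk:
  assumes "loopless_walk p" "k < length p"
  shows "pot (p ! k) = pot (p ! 0) + k"
  using assms(2)
proof (induction k)
  case (Suc k)
  then show ?case
    using successively_nth[OF assms(1)[unfolded loopless_walk_def] Suc.prems] pot_succ by auto
qed simp

lemma loopless_walk_distinct: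
  assumes "loopless_walk p"
  shows "distinct p"
proof (unfold distinct_conv_nth, intro allI impI)
  fix i j assume "i < length p" "j < length p" "i \<noteq> j"
  then have "pot (p ! i) \<noteq> pot (p ! j)" using pot_loopless_walk[OF assms] by simp
  then show "p ! i \<noteq> p ! j" by auto
qed

lemma loopless_walk_length_le:
  assumes "loopless_walk p" "set p \<subseteq> reachable x0"
  shows "length p - 1 \<le> depth x0"
proof (cases "p = []")
  case False
  then have "p ! 0 \<in> set p" "p ! (length p - 1) \<in> set p" by simp_all
  then have "p ! 0 \<in> reachable x0" "p ! (length p - 1) \<in> reachable x0"
    using assms(2) by blast+
  then have "pot x0 \<le> pot (p ! 0)" "pot (p ! (length p - 1)) \<le> pot x0 + depth x0"
    using pot_reachable by blast+
  moreover have "pot (p ! (length p - 1)) = pot (p ! 0) + (length p - 1)"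
    using pot_loopless_walk[OF assms(1), of "length p - 1"] False by simp
  ultimately show ?thesis by linarith
qed simp

lemma loopless_walk_to:
  assumes "y \<in> reach x0 t" "pot y = pot x0 + t"
  shows "\<exists>p. loopless_walk p \<and> set p \<subseteq> reachable x0 \<and> length p = Suc t \<and> last p = y"
  using assms
proof (induction t arbitrary: y)
  case 0
  then show ?case by (intro exI[of _ "[x0]"]) (simp add: loopless_walk_def root_reachable)
next
  case (Suc t)
  from Suc.prems(1) obtain x where x: "x \<in> reach x0 t" "y \<in> succ x"
    by (auto simp: reach_Suc)
  then have "pot x = pot x0 + t" "y \<noteq> x"
    using pot_reach[OF x(1)] pot_succ_le[OF x(2)] Suc.prems(2) by auto
  then obtain p where p: "loopless_walk p" "set p \<subseteq> reachable x0" "length p = Suc t" "last p = x"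
    using Suc.IH[OF x(1)] by blast
  have "y \<in> reachable x0" using Suc.prems(1) by (auto simp: reachable_iff)
  then show ?case
    using p x(2) \<open>y \<noteq> x\<close>
    by (intro exI[of _ "p @ [y]"]) (auto simp: loopless_walk_def successively_append_iff)
qed

lemma longest_loopless_walk:
  "\<exists>p. loopless_walk p \<and> set p \<subseteq> reachable x0 \<and> length p = Suc (depth x0)"
proof -
  obtain y where "y \<in> reach x0 (depth x0)" "pot y = pot x0 + depth x0"
    by (rule depth_attained)
  from loopless_walk_to[OF this] show ?thesis by blast
qed

end

section \<open>The adaptation graph\<close>

definition adapt_succ :: "nat \<Rightarrow> nat \<Rightarrow> mgame \<Rightarrow> mgame set" where
  "adapt_succ n m g = {adapt n g v | \<sigma> v. \<sigma> \<in> NME n m g \<and> v \<in> chi n m \<sigma>}"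

definition agreement :: "nat \<Rightarrow> nat \<Rightarrow> mgame \<Rightarrow> nat list set" where
  "agreement n m g = {v \<in> positions n m. \<forall>i<n. snd g i v = fst g v}"

lemma AD_eq_UN_adapt_succ: "AD n m M = (\<Union>g\<in>M. adapt_succ n m g)"
  by (auto simp: AD_def adapt_succ_def)

lemma AD_iter_eq_funpow: "AD_iter n m t M = ((\<lambda>M. \<Union>g\<in>M. adapt_succ n m g) ^^ t) M"
  by (induction t arbitrary: M)
    (simp_all add: AD_eq_UN_adapt_succ funpow_Suc_right del: funpow.simps)

lemma agreement_adapt:
  "v \<in> positions n m \<Longrightarrow> agreement n m (adapt n g v) = insert v (agreement n m g)"
  by (auto simp: agreement_def adapt_def)

lemma adapt_eq_self_iff:
  assumes "v \<in> positions n m"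
  shows "adapt n g v = g \<longleftrightarrow> v \<in> agreement n m g"
proof
  assume eq: "adapt n g v = g"
  have "snd g i v = fst g v" if "i < n" for i
  proof -
    have "snd (adapt n g v) i v = fst g v" using that by (simp add: adapt_def)
    then show ?thesis by (simp only: eq)
  qed
  then show "v \<in> agreement n m g" using assms by (simp add: agreement_def)
next
  assume "v \<in> agreement n m g"
  then have "(\<lambda>i. if i < n then (snd g i)(v := fst g v) else snd g i) = snd g"
    by (auto simp: agreement_def fun_eq_iff)
  then show "adapt n g v = g" by (simp add: adapt_def)
qed

lemma card_agreement_adapt_succ:
  assumes "g' \<in> adapt_succ n m g" "g' \<noteq> g"
  shows "card (agreement n m g') = Suc (card (agreement n m g))"
proof -
  obtain \<sigma> v where v: "v \<in> chi n m \<sigma>" and g': "g' = adapt n g v"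
    using assms(1) by (auto simp: adapt_succ_def)
  have "v \<in> positions n m" using v by (simp add: chi_def)
  moreover have "v \<notin> agreement n m g"
    using adapt_eq_self_iff[OF \<open>v \<in> positions n m\<close>] assms(2) g' by blast
  moreover have "finite (agreement n m g)"
    by (rule finite_subset[OF _ finite_positions]) (auto simp: agreement_def)
  ultimately show ?thesis using agreement_adapt g' by simp
qed

lemma NME_nonempty:
  assumes "0 < n" "0 < m"
  shows "\<exists>\<sigma>. \<sigma> \<in> NME n m g"
proof -
  have "\<forall>i. \<exists>\<tau>. nash_eq n m (snd g i) \<tau>" using nash_eq_exists[OF assms] by blast
  then obtain \<tau> where "\<And>i. nash_eq n m (snd g i) (\<tau> i)" by metis
  then have "(\<lambda>i. \<tau> i i) \<in> NME n m g" by (auto simp: NME_def)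
  then show ?thesis by blast
qed

lemma chi_nonempty:
  assumes "\<And>j. j < n \<Longrightarrow> mixed m (\<sigma> j)"
  shows "\<exists>v. v \<in> chi n m \<sigma>"
proof -
  have "\<forall>j. \<exists>s. j < n \<longrightarrow> s < m \<and> 0 < \<sigma> j s"
    using mixed_support_nonempty[OF assms] by blast
  then obtain s where s: "\<And>j. j < n \<Longrightarrow> s j < m \<and> 0 < \<sigma> j (s j)" by metis
  have "map s [0..<n] \<in> chi n m \<sigma>"
    using s by (simp add: chi_def positions_def support_def)
  then show ?thesis by blast
qed

lemma adapt_succ_nonempty:
  assumes "0 < n" "0 < m"
  shows "adapt_succ n m g \<noteq> {}"
proof -
  obtain \<sigma> where \<sigma>: "\<sigma> \<in> NME n m g" using NME_nonempty[OF assms] by blast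
  then have "mixed m (\<sigma> j)" if "j < n" for j
    using that by (auto simp: NME_def nash_eq_def)
  then obtain v where "v \<in> chi n m \<sigma>" using chi_nonempty by blast
  then have "adapt n g v \<in> adapt_succ n m g" using \<sigma> by (auto simp: adapt_succ_def)
  then show ?thesis by blast
qed

lemma potential_graph_adapt_succ:
  assumes "0 < n" "0 < m"
  shows "potential_graph (adapt_succ n m) (\<lambda>g. card (agreement n m g)) (card (positions n m))"
proof
  show "card (agreement n m g) \<le> card (positions n m)" for g
    by (rule card_mono[OF finite_positions]) (auto simp: agreement_def)
qed (use card_agreement_adapt_succ adapt_succ_nonempty[OF assms] in auto)

lemma adapt_edge_iff:
  "adapt_edge n m mG g g' \<longleftrightarrow>
     g \<in> AD_star n m {mG} \<and> g' \<in> AD_star n m {mG} \<and> g' \<in> adapt_succ n m g"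
  by (auto simp: adapt_edge_def adapt_succ_def)

lemma is_path'_iff:
  "is_path' n m mG p \<longleftrightarrow> p \<noteq> [] \<and> distinct p \<and> set p \<subseteq> AD_star n m {mG} \<and>
     successively (\<lambda>g g'. g' \<in> adapt_succ n m g \<and> g' \<noteq> g) p"
  unfolding is_path'_def adapt_edge'_def adapt_edge_iff successively_conv_nth
  by (auto; meson Suc_lessD nth_mem subsetD)

theorem proposition20:
  fixes n m :: nat and mG :: mgame
  assumes "0 < n" and "0 < m"
  shows "(\<exists>p. is_path' n m mG p \<and> length p - 1 = AD_length n m mG) \<and>
         (\<forall>p. is_path' n m mG p \<longrightarrow> length p - 1 \<le> AD_length n m mG)"
proof -
  interpret G: potential_graph "adapt_succ n m" "\<lambda>g. card (agreement n m g)" "card (positions n m)"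
    by (rule potential_graph_adapt_succ[OF assms])
  have reach: "AD_iter n m t {mG} = G.reach mG t" for t
    by (simp add: G.reach_def AD_iter_eq_funpow)
  have "AD_star n m {mG} = G.reachable mG"
    by (simp add: AD_star_def G.reachable_def reach)
  then have path: "is_path' n m mG p \<longleftrightarrow> p \<noteq> [] \<and> set p \<subseteq> G.reachable mG \<and> G.loopless_walk p" for p
    using G.loopless_walk_distinct by (auto simp: is_path'_iff G.loopless_walk_def)
  have length: "AD_length n m mG = G.depth mG"
    unfolding AD_length_def reach by (rule G.Least_reach_stable)
  obtain p where "G.loopless_walk p" "set p \<subseteq> G.reachable mG" "length p = Suc (G.depth mG)"
    using G.longest_loopless_walk by blast
  then have "is_path' n m mG p \<and> length p - 1 = AD_length n m mG"
    by (auto simp: path length)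
  moreover have "length p - 1 \<le> AD_length n m mG" if "is_path' n m mG p" for p
    using that G.loopless_walk_length_le by (simp add: path length)
  ultimately show ?thesis by blast
qed

end
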